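(* Let $\Sigma$ be a signature and consider derivations in $\mathcal{J}(\Sigma)$. Suppose $\vdash_{\bar m}\bar s:\Theta\to\Gamma$. (a) If $\vdash_k B$ type $(\Gamma)$, then $\vdash_{k+\max(\bar m)} B[\bar s/\Gamma]$ type $(\Theta)$. (b) If $\vdash_k b:B\ (\Gamma)$, then $\vdash_{k+\max(\bar m)} b[\bar s/\Gamma]:B[\bar s/\Gamma]\ (\Theta)$.
   Context: Fix an infinite set $V$ of variables with decidable equality, and a fresh variable provider: functions $\varphi,\mathsf{fr}$ assigning to each finite $X\subseteq V$ an inhabited subset $\varphi(X)\subseteq V\setminus X$ and an element $\mathsf{fr}(X)\in\varphi(X)$. Fix disjoint sets $F$ (function symbols) and $T$ (type symbols) with decidable equality. Preelements are terms built from variables and symbols of $F$; a pretype is $S(t_1,\ldots,t_n)$ with $S\in T$ and $t_i$ preelements. $\mathrm{V}(E)$ is the set of variables of an expression $E$, $\equiv$ is syntactic identity, and $E[\bar a/\bar x]$ is simultaneous substitution. A precontext is a sequence $\Gamma=x_1:A_1,\ldots,x_n:A_n$ of pretypes with $x_k\in\varphi(\{x_1,\ldots,x_{k-1}\})$ and $\mathrm{V}(A_k)\subseteq\{x_1,\ldots,x_{k-1}\}$; $\mathrm{OV}(\Gamma)=x_1,\ldots,x_n$, $\mathrm{V}(\Gamma)=\{x_1,\ldots,x_n\}$, $\mathrm{Fresh}(\Gamma)=\varphi(\mathrm{V}(\Gamma))$, $\mathrm{fresh}(\Gamma)=\mathsf{fr}(\mathrm{V}(\Gamma))$, $E[\bar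 a/\Gamma]=E[\bar a/x_1,\ldots,x_n]$. Top variables: $\mathrm{TV}(\langle\rangle)=\emptyset$, $\mathrm{TV}(\Gamma,x:A)=(\mathrm{TV}(\Gamma)\setminus\mathrm{V}(A))\cup\{x\}$. A determining sequence for $\Gamma$ is a strictly increasing $\bar i=i_1,\ldots,i_k$ in $\{1,\ldots,n\}$ with $\mathrm{TV}(\Gamma)\subseteq\{x_{i_1},\ldots,x_{i_k}\}$; for $\bar a=a_1,\ldots,a_n$ put $\bar a_{\bar i}=a_{i_1},\ldots,a_{i_k}$. A type predeclaration is $(\Gamma,S,\bar i)$ with $S\in T$, $\bar i$ determining; a function predeclaration is $(\Gamma,f,\bar i,U)$ with $f\in F$, $\bar i$ determining, $U$ a pretype with $\mathrm{V}(U)\subseteq\mathrm{V}(\Gamma)$. A presignature is a set $\Sigma$ of predeclarations with no symbol declared twice. Judgements are "$\Gamma$ context", "$A$ type $(\Gamma)$", "$a:A\ (\Gamma)$". $\mathcal{J}(\Sigma)$ is the smallest set of judgements closed under: (R1) $\langle\rangle$ context; (R2) from $\Gamma$ context and $A$ type $(\Gamma)$ infer $\Gamma,x:A$ context, for $x\in\mathrm{Fresh}(\Gamma)$; (R3) from $x_1:A_1,\ldots,x_n:A_n$ context infer $x_i:A_i\ (x_1:A_1,\ldots,x_n:A_n)$; (R4) if $(\Gamma,S,\bar i)\in\Sigma$ and $\bar a:\Delta\to\Gamma$, infer $S(\bar a_{\bar i})$ type $(\Delta)$; (R5) if $(\Gamma,f,\bar i,U)\in\Sigma$, $\bar a:\Delta\to\Gamma$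 and $U[\bar a/\Gamma]$ type $(\Delta)$, infer $f(\bar a_{\bar i}):U[\bar a/\Gamma]\ (\Delta)$. Here, for $\Gamma=x_1:A_1,\ldots,x_n:A_n$, the context map "$\bar a:\Delta\to\Gamma$" abbreviates the $n+2$ judgements $\Delta$ context, $\Gamma$ context, and $a_k:A_k[a_1,\ldots,a_{k-1}/x_1,\ldots,x_{k-1}]\ (\Delta)$ for $k=1,\ldots,n$. $\Sigma$ is a signature if ($\Gamma$ context)$\in\mathcal{J}(\Sigma)$ whenever $(\Gamma,S,\bar i)\in\Sigma$, and ($U$ type $(\Gamma)$)$\in\mathcal{J}(\Sigma)$ whenever $(\Gamma,f,\bar i,U)\in\Sigma$. Heights: a derivation consisting of a single application of (R1) has height $0$; applying a rule to premisses derived with heights $h_1,\ldots,h_r$ gives height $1+\max_j h_j$. $\vdash_k\mathcal U$ means $\mathcal U$ has a derivation in $\mathcal{J}(\Sigma)$ of height at most $k$. For a context map $\bar a:\Delta\to\Gamma$ with $|\Gamma|=n$, $\vdash_{m_1,\ldots,m_{n+2}}\bar a:\Delta\to\Gamma$ means its $n+2$ constituent judgements (in the order listed above) have derivations of heights at most $m_1,\ldots,m_{n+2}$; $\max(\bar m)$ is the largest $m_j$. *)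

theory Defs
  imports Main
begin

text \<open>Variables have type 'v, function symbols type 'f, type symbols type 't.
  Using separate HOL types makes F and T disjoint; equality is decidable in HOL.\<close>

datatype ('v, 'f) pelem = Var 'v | App 'f "('v, 'f) pelem list"

datatype ('v, 'f, 't) ptype = PT 't "('v, 'f) pelem list"

primrec varsE :: "('v, 'f) pelem \<Rightarrow> 'v set" where
  "varsE (Var x) = {x}"
| "varsE (App f ts) = \<Union> (set (map varsE ts))"

primrec varsT :: "('v, 'f, 't) ptype \<Rightarrow> 'v set" where
  "varsT (PT S ts) = \<Union> (set (map varsE ts))"

primrec substE :: "('v \<Rightarrow> ('v, 'f) pelem) \<Rightarrow> ('v, 'f) pelem \<Rightarrow> ('v, 'f) pelem" where
  "substE \<sigma> (Var x) = \<sigma> x"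
| "substE \<sigma> (App f ts) = App f (map (substE \<sigma>) ts)"

primrec substT :: "('v \<Rightarrow> ('v, 'f) pelem) \<Rightarrow> ('v, 'f, 't) ptype \<Rightarrow> ('v, 'f, 't) ptype" where
  "substT \<sigma> (PT S ts) = PT S (map (substE \<sigma>) ts)"

definition sub :: "'v list \<Rightarrow> ('v, 'f) pelem list \<Rightarrow> 'v \<Rightarrow> ('v, 'f) pelem" where
  "sub xs as = (\<lambda>v. case map_of (zip xs as) v of Some a \<Rightarrow> a | None \<Rightarrow> Var v)"

type_synonym ('v, 'f, 't) ctx = "('v \<times> ('v, 'f, 't) ptype) list"

definition OV :: "('v, 'f, 't) ctx \<Rightarrow> 'v list" where
  "OV \<Gamma> = map fst \<Gamma>"

definition VC :: "('v, 'f, 't) ctx \<Rightarrow> 'v set" where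
  "VC \<Gamma> = set (OV \<Gamma>)"

definition fresh_provider :: "('v set \<Rightarrow> 'v set) \<Rightarrow> ('v set \<Rightarrow> 'v) \<Rightarrow> bool" where
  "fresh_provider \<phi> fr \<longleftrightarrow> infinite (UNIV :: 'v set) \<and>
     (\<forall>X. finite X \<longrightarrow> \<phi> X \<subseteq> - X \<and> fr X \<in> \<phi> X)"

definition precontext :: "('v set \<Rightarrow> 'v set) \<Rightarrow> ('v, 'f, 't) ctx \<Rightarrow> bool" where
  "precontext \<phi> \<Gamma> \<longleftrightarrow> (\<forall>k < length \<Gamma>.
      fst (\<Gamma> ! k) \<in> \<phi> (set (map fst (take k \<Gamma>))) \<and>
      varsT (snd (\<Gamma> ! k)) \<subseteq> set (map fst (take k \<Gamma>)))"

definition TV :: "('v, 'f, 't) ctx \<Rightarrow> 'v set" where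
  "TV \<Gamma> = foldl (\<lambda>S (x, A). (S - varsT A) \<union> {x}) {} \<Gamma>"

text \<open>Determining sequences use 1-based indices i_1 < ... < i_k in {1..n}.\<close>
definition determining :: "('v, 'f, 't) ctx \<Rightarrow> nat list \<Rightarrow> bool" where
  "determining \<Gamma> is \<longleftrightarrow> sorted_wrt (<) is \<and> (\<forall>i \<in> set is. 1 \<le> i \<and> i \<le> length \<Gamma>) \<and>
     TV \<Gamma> \<subseteq> {fst (\<Gamma> ! (i - 1)) | i. i \<in> set is}"

definition sel :: "'a list \<Rightarrow> nat list \<Rightarrow> 'a list" where
  "sel as is = map (\<lambda>i. as ! (i - 1)) is"

datatype ('v, 'f, 't) decl =
    TDecl "('v, 'f, 't) ctx" 't "nat list"
  | FDecl "('v, 'f, 't) ctx" 'f "nat list" "('v, 'f, 't) ptype"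

primrec predecl :: "('v set \<Rightarrow> 'v set) \<Rightarrow> ('v, 'f, 't) decl \<Rightarrow> bool" where
  "predecl \<phi> (TDecl \<Gamma> S is) \<longleftrightarrow> precontext \<phi> \<Gamma> \<and> determining \<Gamma> is"
| "predecl \<phi> (FDecl \<Gamma> f is U) \<longleftrightarrow> precontext \<phi> \<Gamma> \<and> determining \<Gamma> is \<and> varsT U \<subseteq> VC \<Gamma>"

primrec decl_sym :: "('v, 'f, 't) decl \<Rightarrow> 'f + 't" where
  "decl_sym (TDecl \<Gamma> S is) = Inr S"
| "decl_sym (FDecl \<Gamma> f is U) = Inl f"

definition presignature :: "('v set \<Rightarrow> 'v set) \<Rightarrow> ('v, 'f, 't) decl set \<Rightarrow> bool" where
  "presignature \<phi> \<Sigma> \<longleftrightarrow> (\<forall>d \<in> \<Sigma>. predecl \<phi> d) \<and>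
     (\<forall>d1 \<in> \<Sigma>. \<forall>d2 \<in> \<Sigma>. decl_sym d1 = decl_sym d2 \<longrightarrow> d1 = d2)"

datatype ('v, 'f, 't) judg =
    IsCtx "('v, 'f, 't) ctx"
  | IsType "('v, 'f, 't) ctx" "('v, 'f, 't) ptype"
  | HasType "('v, 'f, 't) ctx" "('v, 'f) pelem" "('v, 'f, 't) ptype"

text \<open>The n+2 judgements abbreviated by the context map  as : Delta -> Gamma, in order.\<close>
definition cmap_judgs ::
  "('v, 'f) pelem list \<Rightarrow> ('v, 'f, 't) ctx \<Rightarrow> ('v, 'f, 't) ctx \<Rightarrow> ('v, 'f, 't) judg list" where
  "cmap_judgs as \<Delta> \<Gamma> = [IsCtx \<Delta>, IsCtx \<Gamma>] @
     map (\<lambda>k. HasType \<Delta> (as ! k)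
               (substT (sub (take k (OV \<Gamma>)) (take k as)) (snd (\<Gamma> ! k)))) [0..<length \<Gamma>]"

text \<open>der phi Sigma J h: J has a derivation in J(Sigma) of height exactly h.\<close>
inductive der :: "('v set \<Rightarrow> 'v set) \<Rightarrow> ('v, 'f, 't) decl set \<Rightarrow> ('v, 'f, 't) judg \<Rightarrow> nat \<Rightarrow> bool"
  for \<phi> \<Sigma> where
  R1: "der \<phi> \<Sigma> (IsCtx []) 0"
| R2: "der \<phi> \<Sigma> (IsCtx \<Gamma>) h1 \<Longrightarrow> der \<phi> \<Sigma> (IsType \<Gamma> A) h2 \<Longrightarrow> x \<in> \<phi> (VC \<Gamma>) \<Longrightarrow>
       der \<phi> \<Sigma> (IsCtx (\<Gamma> @ [(x, A)])) (Suc (max h1 h2))"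
| R3: "der \<phi> \<Sigma> (IsCtx \<Gamma>) h \<Longrightarrow> i < length \<Gamma> \<Longrightarrow>
       der \<phi> \<Sigma> (HasType \<Gamma> (Var (fst (\<Gamma> ! i))) (snd (\<Gamma> ! i))) (Suc h)"
| R4: "TDecl \<Gamma> S is \<in> \<Sigma> \<Longrightarrow> length as = length \<Gamma> \<Longrightarrow>
       length hs = length (cmap_judgs as \<Delta> \<Gamma>) \<Longrightarrow>
       (\<forall>j < length hs. der \<phi> \<Sigma> (cmap_judgs as \<Delta> \<Gamma> ! j) (hs ! j)) \<Longrightarrow>
       der \<phi> \<Sigma> (IsType \<Delta> (PT S (sel as is))) (Suc (Max (set hs)))"
| R5: "FDecl \<Gamma> f is U \<in> \<Sigma> \<Longrightarrow> length as = length \<Gamma> \<Longrightarrow>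
       length hs = length (cmap_judgs as \<Delta> \<Gamma>) \<Longrightarrow>
       (\<forall>j < length hs. der \<phi> \<Sigma> (cmap_judgs as \<Delta> \<Gamma> ! j) (hs ! j)) \<Longrightarrow>
       der \<phi> \<Sigma> (IsType \<Delta> (substT (sub (OV \<Gamma>) as) U)) h \<Longrightarrow>
       der \<phi> \<Sigma> (HasType \<Delta> (App f (sel as is)) (substT (sub (OV \<Gamma>) as) U))
         (Suc (max (Max (set hs)) h))"

definition derivable :: "('v set \<Rightarrow> 'v set) \<Rightarrow> ('v, 'f, 't) decl set \<Rightarrow> ('v, 'f, 't) judg \<Rightarrow> bool" where
  "derivable \<phi> \<Sigma> J \<longleftrightarrow> (\<exists>h. der \<phi> \<Sigma> J h)"

definition der_le :: "('v set \<Rightarrow> 'v set) \<Rightarrow> ('v, 'f, 't) decl set \<Rightarrow> nat \<Rightarrow> ('v, 'f, 't) judg \<Rightarrow> bool" where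
  "der_le \<phi> \<Sigma> k J \<longleftrightarrow> (\<exists>h \<le> k. der \<phi> \<Sigma> J h)"

definition cmap_le ::
  "('v set \<Rightarrow> 'v set) \<Rightarrow> ('v, 'f, 't) decl set \<Rightarrow> nat list \<Rightarrow> ('v, 'f) pelem list \<Rightarrow>
   ('v, 'f, 't) ctx \<Rightarrow> ('v, 'f, 't) ctx \<Rightarrow> bool" where
  "cmap_le \<phi> \<Sigma> ms as \<Delta> \<Gamma> \<longleftrightarrow> length as = length \<Gamma> \<and>
     length ms = length (cmap_judgs as \<Delta> \<Gamma>) \<and>
     (\<forall>j < length ms. der_le \<phi> \<Sigma> (ms ! j) (cmap_judgs as \<Delta> \<Gamma> ! j))"

definition signature :: "('v set \<Rightarrow> 'v set) \<Rightarrow> ('v, 'f, 't) decl set \<Rightarrow> bool" where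
  "signature \<phi> \<Sigma> \<longleftrightarrow> presignature \<phi> \<Sigma> \<and>
     (\<forall>\<Gamma> S is. TDecl \<Gamma> S is \<in> \<Sigma> \<longrightarrow> derivable \<phi> \<Sigma> (IsCtx \<Gamma>)) \<and>
     (\<forall>\<Gamma> f is U. FDecl \<Gamma> f is U \<in> \<Sigma> \<longrightarrow> derivable \<phi> \<Sigma> (IsType \<Gamma> U))"

end

theory Submission imports Defs begin

text \<open>
  Induction on the derivation of the judgement in context \<Gamma>. Context judgements
  (rules R1, R2) are sent to "\<Theta> context", which by hypothesis has height at most max m.
  A variable judgement x_i : A_i (\<Gamma>) is sent to s_i : A_i[s_1..s_(i-1)] (\<Theta>), one of the
  judgements of the context map itself; this needs the variables of \<Gamma> to be distinct, which
  holds because derivable contexts are precontexts. For an instance of a declaration over \<Gamma>'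
  with premisses a : \<Gamma> \<rightarrow> \<Gamma>', composing substitutions yields a[s] : \<Theta> \<rightarrow> \<Gamma>': the premiss
  "\<Gamma>' context" is kept and every other premiss is replaced by its substitution instance,
  whose height grows by at most max m.
\<close>

lemma substE_cong: "(\<And>v. v \<in> varsE t \<Longrightarrow> \<sigma> v = \<tau> v) \<Longrightarrow> substE \<sigma> t = substE \<tau> t"
  by (induction t) auto

lemma substT_cong: "(\<And>v. v \<in> varsT A \<Longrightarrow> \<sigma> v = \<tau> v) \<Longrightarrow> substT \<sigma> A = substT \<tau> A"
  by (cases A) (auto intro!: substE_cong)

lemma substE_substE: "substE \<tau> (substE \<sigma> t) = substE (\<lambda>v. substE \<tau> (\<sigma> v)) t"
  by (induction t) auto

lemma substT_substT: "substT \<tau> (substT \<sigma> A) = substT (\<lambda>v. substE \<tau> (\<sigma> v)) A"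
  by (cases A) (auto simp: substE_substE)

lemma sub_map:
  assumes "length xs = length as" and "v \<in> set xs"
  shows "sub xs (map g as) v = g (sub xs as v)"
proof -
  obtain a where a: "map_of (zip xs as) v = Some a"
    using assms map_of_zip_is_None[of xs as v] by fastforce
  then have "map_of (zip xs (map g as)) v = Some (g a)"
    by (simp add: zip_map2 map_of_map)
  with a show ?thesis by (simp add: sub_def)
qed

lemma substT_sub_substT:
  assumes "length xs = length as" and "varsT A \<subseteq> set xs"
  shows "substT \<tau> (substT (sub xs as) A) = substT (sub xs (map (substE \<tau>) as)) A"
  unfolding substT_substT using assms by (auto intro!: substT_cong simp: sub_map)

lemma sub_take:
  assumes l: "length xs = length as" and v: "v \<in> set (take i xs)"
  shows "sub (take i xs) (take i as) v = sub xs as v"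
proof -
  have z: "zip (take i xs) (take i as) = take i (zip xs as)" by (simp add: take_zip)
  have len_take: "length (take i xs) = length (take i as)" using l by simp
  obtain a where a: "map_of (take i (zip xs as)) v = Some a"
    using map_of_zip_is_None[OF len_take, of v] v z by auto
  have "map_of (zip xs as) v = Some a"
    using a map_of_append[of "take i (zip xs as)" "drop i (zip xs as)"]
    by (simp add: map_add_def)
  then show ?thesis using a z by (simp add: sub_def)
qed

lemma sub_nth: "distinct xs \<Longrightarrow> length xs = length as \<Longrightarrow> i < length xs \<Longrightarrow> sub xs as (xs ! i) = as ! i"
  by (simp add: sub_def map_of_zip_nth)

lemma varsE_sel_subset:
  assumes "\<forall>i\<in>set is. 1 \<le> i \<and> i \<le> length as" and "\<forall>k<length as. varsE (as ! k) \<subseteq> X"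
  shows "\<Union> (set (map varsE (sel as is))) \<subseteq> X"
proof
  fix x assume "x \<in> \<Union> (set (map varsE (sel as is)))"
  then obtain i where i: "i \<in> set is" "x \<in> varsE (as ! (i - 1))" by (auto simp: sel_def)
  then have "i - 1 < length as" using assms(1) by force
  with assms(2) i show "x \<in> X" by blast
qed

lemma sel_map: "\<forall>i\<in>set is. 1 \<le> i \<and> i \<le> length as \<Longrightarrow> sel (map g as) is = map g (sel as is)"
  unfolding sel_def by (auto intro!: map_cong)

lemma precontext_snoc:
  assumes "precontext \<phi> \<Gamma>" and "x \<in> \<phi> (VC \<Gamma>)" and "varsT A \<subseteq> VC \<Gamma>"
  shows "precontext \<phi> (\<Gamma> @ [(x, A)])"
  unfolding precontext_def
proof (intro allI impI)
  fix k assume "k < length (\<Gamma> @ [(x, A)])"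
  then consider "k < length \<Gamma>" | "k = length \<Gamma>" by fastforce
  then show "fst ((\<Gamma> @ [(x, A)]) ! k) \<in> \<phi> (set (map fst (take k (\<Gamma> @ [(x, A)])))) \<and>
      varsT (snd ((\<Gamma> @ [(x, A)]) ! k)) \<subseteq> set (map fst (take k (\<Gamma> @ [(x, A)])))"
  proof cases
    case 1
    then show ?thesis using assms(1) by (simp add: precontext_def nth_append)
  next
    case 2
    then show ?thesis using assms(2,3) by (simp add: VC_def OV_def)
  qed
qed

lemma precontext_varsT_take:
  "precontext \<phi> \<Gamma> \<Longrightarrow> k < length \<Gamma> \<Longrightarrow> varsT (snd (\<Gamma> ! k)) \<subseteq> set (take k (OV \<Gamma>))"
  unfolding precontext_def OV_def by (simp add: take_map)

lemma precontext_distinct: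
  assumes "fresh_provider \<phi> fr" and "precontext \<phi> \<Gamma>"
  shows "distinct (OV \<Gamma>)"
proof -
  have fresh: "OV \<Gamma> ! j \<notin> set (take j (OV \<Gamma>))" if "j < length \<Gamma>" for j
  proof -
    have "fst (\<Gamma> ! j) \<in> \<phi> (set (map fst (take j \<Gamma>)))"
      using assms(2) that by (simp add: precontext_def)
    moreover have "\<phi> (set (map fst (take j \<Gamma>))) \<subseteq> - set (map fst (take j \<Gamma>))"
      using assms(1) by (simp add: fresh_provider_def)
    ultimately show ?thesis using that by (auto simp: OV_def take_map)
  qed
  have "OV \<Gamma> ! i \<noteq> OV \<Gamma> ! j" if "i < j" "j < length \<Gamma>" for i j
  proof -
    have "OV \<Gamma> ! i \<in> set (take j (OV \<Gamma>))"
      using nth_mem[of i "take j (OV \<Gamma>)"] that by (simp add: OV_def)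
    with fresh[OF that(2)] show ?thesis by metis
  qed
  then show ?thesis
    unfolding distinct_conv_nth by (metis OV_def length_map linorder_neqE_nat)
qed

lemma presignature_TDecl:
  assumes "presignature \<phi> \<Sigma>" and "TDecl \<Gamma> S is \<in> \<Sigma>"
  shows "precontext \<phi> \<Gamma> \<and> (\<forall>i\<in>set is. 1 \<le> i \<and> i \<le> length \<Gamma>)"
proof -
  have "predecl \<phi> (TDecl \<Gamma> S is)" using assms unfolding presignature_def by blast
  then show ?thesis by (simp add: determining_def)
qed

lemma presignature_FDecl:
  assumes "presignature \<phi> \<Sigma>" and "FDecl \<Gamma> f is U \<in> \<Sigma>"
  shows "precontext \<phi> \<Gamma> \<and> (\<forall>i\<in>set is. 1 \<le> i \<and> i \<le> length \<Gamma>) \<and> varsT U \<subseteq> set (OV \<Gamma>)"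
proof -
  have "predecl \<phi> (FDecl \<Gamma> f is U)" using assms unfolding presignature_def by blast
  then show ?thesis by (simp add: determining_def VC_def)
qed

lemma der_le_mono: "der_le \<phi> \<Sigma> k J \<Longrightarrow> k \<le> k' \<Longrightarrow> der_le \<phi> \<Sigma> k' J"
  unfolding der_le_def using le_trans by blast

lemma der_le_heights:
  assumes "\<forall>j<length Js. der_le \<phi> \<Sigma> k (Js ! j)"
  obtains hs where "length hs = length Js" and "\<forall>j<length Js. der \<phi> \<Sigma> (Js ! j) (hs ! j)"
    and "\<forall>h\<in>set hs. h \<le> k"
proof -
  define hs where "hs = map (\<lambda>j. SOME h. h \<le> k \<and> der \<phi> \<Sigma> (Js ! j) h) [0..<length Js]"
  have len: "length hs = length Js" by (simp add: hs_def)
  have hs_nth: "hs ! j \<le> k \<and> der \<phi> \<Sigma> (Js ! j) (hs ! j)" if "j < length Js" for j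
  proof -
    have "\<exists>h. h \<le> k \<and> der \<phi> \<Sigma> (Js ! j) h" using assms that unfolding der_le_def by blast
    from someI_ex[OF this] show ?thesis using that by (simp add: hs_def)
  qed
  have "\<forall>h\<in>set hs. h \<le> k" using hs_nth len by (auto simp: in_set_conv_nth)
  with len hs_nth show thesis using that by blast
qed

lemma length_cmap_judgs [simp]: "length (cmap_judgs as \<Delta> \<Gamma>) = length \<Gamma> + 2"
  by (simp add: cmap_judgs_def)

lemma cmap_judgs_nth:
  "cmap_judgs as \<Delta> \<Gamma> ! 0 = IsCtx \<Delta>"
  "cmap_judgs as \<Delta> \<Gamma> ! Suc 0 = IsCtx \<Gamma>"
  "k < length \<Gamma> \<Longrightarrow> cmap_judgs as \<Delta> \<Gamma> ! Suc (Suc k) =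
     HasType \<Delta> (as ! k) (substT (sub (take k (OV \<Gamma>)) (take k as)) (snd (\<Gamma> ! k)))"
  by (simp_all add: cmap_judgs_def nth_append)

lemma cmap_le_judgs:
  "cmap_le \<phi> \<Sigma> ms as \<Delta> \<Gamma> \<Longrightarrow> j < length \<Gamma> + 2 \<Longrightarrow>
     der_le \<phi> \<Sigma> (Max (set ms)) (cmap_judgs as \<Delta> \<Gamma> ! j)"
  unfolding cmap_le_def der_le_def by (metis length_cmap_judgs nth_mem List.finite_set Max_ge le_trans)

subsection \<open>Well-formedness of derivable judgements\<close>

fun judg_wf :: "('v set \<Rightarrow> 'v set) \<Rightarrow> ('v, 'f, 't) judg \<Rightarrow> bool" where
  "judg_wf \<phi> (IsCtx \<Gamma>) \<longleftrightarrow> precontext \<phi> \<Gamma>"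
| "judg_wf \<phi> (IsType \<Gamma> A) \<longleftrightarrow> varsT A \<subseteq> VC \<Gamma>"
| "judg_wf \<phi> (HasType \<Gamma> a A) \<longleftrightarrow> varsE a \<subseteq> VC \<Gamma>"

lemma der_judg_wf:
  assumes ps: "presignature \<phi> \<Sigma>"
  shows "der \<phi> \<Sigma> J h \<Longrightarrow> judg_wf \<phi> J"
proof (induction rule: der.induct)
  case R1
  then show ?case by (simp add: precontext_def)
next
  case (R2 \<Gamma> h1 A h2 x)
  then show ?case by (simp add: precontext_snoc)
next
  case (R3 \<Gamma> h i)
  then show ?case by (simp add: VC_def OV_def)
next
  case (R4 \<Gamma> S "is" as hs \<Delta>)
  have vars: "\<forall>k<length as. varsE (as ! k) \<subseteq> VC \<Delta>"
  proof (intro allI impI)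
    fix k assume k: "k < length as"
    have "Suc (Suc k) < length hs" using k R4(2,3) by simp
    then have "judg_wf \<phi> (cmap_judgs as \<Delta> \<Gamma> ! Suc (Suc k))" using R4.IH by blast
    then show "varsE (as ! k) \<subseteq> VC \<Delta>" using k R4(2) by (simp add: cmap_judgs_nth)
  qed
  have "\<forall>i\<in>set is. 1 \<le> i \<and> i \<le> length as" using presignature_TDecl[OF ps R4(1)] R4(2) by simp
  then show ?case using varsE_sel_subset[OF _ vars] by simp
next
  case (R5 \<Gamma> f "is" U as hs \<Delta> h)
  have vars: "\<forall>k<length as. varsE (as ! k) \<subseteq> VC \<Delta>"
  proof (intro allI impI)
    fix k assume k: "k < length as"
    have "Suc (Suc k) < length hs" using k R5(2,3) by simp
    then have "judg_wf \<phi> (cmap_judgs as \<Delta> \<Gamma> ! Suc (Suc k))" using R5.IH(1) by blast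
    then show "varsE (as ! k) \<subseteq> VC \<Delta>" using k R5(2) by (simp add: cmap_judgs_nth)
  qed
  have "\<forall>i\<in>set is. 1 \<le> i \<and> i \<le> length as" using presignature_FDecl[OF ps R5(1)] R5(2) by simp
  then show ?case using varsE_sel_subset[OF _ vars] by simp
qed

subsection \<open>Substitution into judgements\<close>

fun judg_ctx :: "('v, 'f, 't) judg \<Rightarrow> ('v, 'f, 't) ctx" where
  "judg_ctx (IsCtx \<Gamma>) = \<Gamma>"
| "judg_ctx (IsType \<Gamma> A) = \<Gamma>"
| "judg_ctx (HasType \<Gamma> a A) = \<Gamma>"

fun subst_judg :: "('v \<Rightarrow> ('v, 'f) pelem) \<Rightarrow> ('v, 'f, 't) ctx \<Rightarrow> ('v, 'f, 't) judg \<Rightarrow> ('v, 'f, 't) judg" where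
  "subst_judg \<sigma> \<Theta> (IsCtx \<Gamma>) = IsCtx \<Theta>"
| "subst_judg \<sigma> \<Theta> (IsType \<Gamma> A) = IsType \<Theta> (substT \<sigma> A)"
| "subst_judg \<sigma> \<Theta> (HasType \<Gamma> a A) = HasType \<Theta> (substE \<sigma> a) (substT \<sigma> A)"

lemma judg_ctx_cmap_judgs:
  assumes "j < length \<Gamma> + 2" and "j \<noteq> 1"
  shows "judg_ctx (cmap_judgs as \<Delta> \<Gamma> ! j) = \<Delta>"
proof (cases j)
  case (Suc i)
  with assms obtain k where "j = Suc (Suc k)" "k < length \<Gamma>" by (cases i) auto
  then show ?thesis by (simp add: cmap_judgs_nth)
qed (simp add: cmap_judgs_nth)

lemma subst_judg_cmap_judgs:
  assumes pc: "precontext \<phi> \<Gamma>" and len: "length as = length \<Gamma>"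
    and "j < length \<Gamma> + 2" and "j \<noteq> 1"
  shows "subst_judg \<sigma> \<Theta> (cmap_judgs as \<Delta> \<Gamma> ! j) = cmap_judgs (map (substE \<sigma>) as) \<Theta> \<Gamma> ! j"
proof (cases j)
  case (Suc i)
  with assms obtain k where j: "j = Suc (Suc k)" and k: "k < length \<Gamma>" by (cases i) auto
  have "substT \<sigma> (substT (sub (take k (OV \<Gamma>)) (take k as)) (snd (\<Gamma> ! k))) =
        substT (sub (take k (OV \<Gamma>)) (take k (map (substE \<sigma>) as))) (snd (\<Gamma> ! k))"
    using substT_sub_substT[OF _ precontext_varsT_take[OF pc k]] len
    by (simp add: OV_def take_map)
  then show ?thesis using j k len by (simp add: cmap_judgs_nth)
qed (simp add: cmap_judgs_nth)

lemma subst_judg_var: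
  assumes pc: "precontext \<phi> \<Gamma>" and dist: "distinct (OV \<Gamma>)"
    and len: "length ss = length \<Gamma>" and i: "i < length \<Gamma>"
  shows "subst_judg (sub (OV \<Gamma>) ss) \<Theta> (HasType \<Gamma> (Var (fst (\<Gamma> ! i))) (snd (\<Gamma> ! i))) =
    cmap_judgs ss \<Theta> \<Gamma> ! Suc (Suc i)"
proof -
  have "sub (OV \<Gamma>) ss (fst (\<Gamma> ! i)) = ss ! i"
    using sub_nth[OF dist, of ss i] len i by (simp add: OV_def)
  moreover have "substT (sub (OV \<Gamma>) ss) (snd (\<Gamma> ! i)) =
      substT (sub (take i (OV \<Gamma>)) (take i ss)) (snd (\<Gamma> ! i))"
    using precontext_varsT_take[OF pc i] sub_take[of "OV \<Gamma>" ss] len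
    by (auto intro!: substT_cong simp: OV_def)
  ultimately show ?thesis using i by (simp add: cmap_judgs_nth)
qed

lemma der_cmap_judgs_subst:
  assumes pc: "precontext \<phi> \<Gamma>" and len: "length as = length \<Gamma>"
    and lhs: "length hs = length \<Gamma> + 2"
    and ctx: "der \<phi> \<Sigma> (IsCtx \<Gamma>) (hs ! 1)"
    and subst: "\<And>j. j < length \<Gamma> + 2 \<Longrightarrow> j \<noteq> 1 \<Longrightarrow>
      der_le \<phi> \<Sigma> (hs ! j + M) (subst_judg \<sigma> \<Theta> (cmap_judgs as \<Delta> \<Gamma> ! j))"
  obtains hs' where "length hs' = length (cmap_judgs (map (substE \<sigma>) as) \<Theta> \<Gamma>)"
    and "\<forall>j<length hs'. der \<phi> \<Sigma> (cmap_judgs (map (substE \<sigma>) as) \<Theta> \<Gamma> ! j) (hs' ! j)"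
    and "Max (set hs') \<le> Max (set hs) + M"
proof -
  let ?Js = "cmap_judgs (map (substE \<sigma>) as) \<Theta> \<Gamma>"
  have hs_le_Max: "hs ! j \<le> Max (set hs)" if "j < length \<Gamma> + 2" for j
    using that lhs by simp
  have "\<forall>j<length ?Js. der_le \<phi> \<Sigma> (Max (set hs) + M) (?Js ! j)"
  proof (intro allI impI)
    fix j assume j: "j < length ?Js"
    show "der_le \<phi> \<Sigma> (Max (set hs) + M) (?Js ! j)"
    proof (cases "j = 1")
      case True
      then show ?thesis
        using ctx hs_le_Max[of 1] unfolding der_le_def
        by (intro exI[of _ "hs ! 1"]) (simp add: cmap_judgs_nth)
    next
      case False
      then have "der_le \<phi> \<Sigma> (hs ! j + M) (?Js ! j)"
        using subst[of j] subst_judg_cmap_judgs[OF pc len, of j] j by simp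
      then show ?thesis using hs_le_Max[of j] j by (simp add: der_le_mono)
    qed
  qed
  then obtain hs' where hs': "length hs' = length ?Js" "\<forall>j<length ?Js. der \<phi> \<Sigma> (?Js ! j) (hs' ! j)"
    and bounded: "\<forall>h\<in>set hs'. h \<le> Max (set hs) + M"
    by (rule der_le_heights)
  moreover have "Max (set hs') \<le> Max (set hs) + M"
    using hs'(1) bounded by (subst Max_le_iff) auto
  ultimately show thesis using that by simp
qed

lemma der_subst:
  assumes ps: "presignature \<phi> \<Sigma>" and cm: "cmap_le \<phi> \<Sigma> ms ss \<Theta> \<Gamma>"
    and pc: "precontext \<phi> \<Gamma>" and dist: "distinct (OV \<Gamma>)"
  shows "der \<phi> \<Sigma> J h \<Longrightarrow> judg_ctx J = \<Gamma> \<Longrightarrow>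
    der_le \<phi> \<Sigma> (h + Max (set ms)) (subst_judg (sub (OV \<Gamma>) ss) \<Theta> J)"
proof (induction rule: der.induct)
  let ?M = "Max (set ms)"
  have ctx\<Theta>: "der_le \<phi> \<Sigma> ?M (IsCtx \<Theta>)"
    using cmap_le_judgs[OF cm, of 0] by (simp add: cmap_judgs_nth)
  {
    case R1
    show ?case using ctx\<Theta> by (simp add: der_le_mono)
  next
    case (R2 \<Gamma>' h1 A h2 x)
    show ?case using ctx\<Theta> by (simp add: der_le_mono)
  next
    case (R3 \<Gamma>' h i)
    have "\<Gamma>' = \<Gamma>" using R3.prems by simp
    moreover have "length ss = length \<Gamma>" using cm by (simp add: cmap_le_def)
    ultimately show ?case
      using cmap_le_judgs[OF cm, of "Suc (Suc i)"] subst_judg_var[OF pc dist] R3.hyps(2)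
      by (auto intro: der_le_mono)
  next
    case (R4 \<Gamma>' S "is" as hs \<Delta>)
    have \<Delta>: "\<Delta> = \<Gamma>" using R4.prems by simp
    obtain pc': "precontext \<phi> \<Gamma>'" and idx: "\<forall>i\<in>set is. 1 \<le> i \<and> i \<le> length as"
      using presignature_TDecl[OF ps R4(1)] R4(2) by auto
    obtain hs' where hs': "length hs' = length (cmap_judgs (map (substE (sub (OV \<Gamma>) ss)) as) \<Theta> \<Gamma>')"
      "\<forall>j<length hs'. der \<phi> \<Sigma> (cmap_judgs (map (substE (sub (OV \<Gamma>) ss)) as) \<Theta> \<Gamma>' ! j) (hs' ! j)"
      and Max_hs': "Max (set hs') \<le> Max (set hs) + ?M"
    proof (rule der_cmap_judgs_subst[OF pc' R4(2)])
      show "length hs = length \<Gamma>' + 2" using R4(3) by simp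
      show "der \<phi> \<Sigma> (IsCtx \<Gamma>') (hs ! 1)" using R4(3) R4.IH by (auto simp: cmap_judgs_nth)
      show "der_le \<phi> \<Sigma> (hs ! j + ?M) (subst_judg (sub (OV \<Gamma>) ss) \<Theta> (cmap_judgs as \<Delta> \<Gamma>' ! j))"
        if "j < length \<Gamma>' + 2" "j \<noteq> 1" for j
        using R4(3) R4.IH that judg_ctx_cmap_judgs[OF that] \<Delta> by auto
    qed
    have "der \<phi> \<Sigma> (IsType \<Theta> (PT S (sel (map (substE (sub (OV \<Gamma>) ss)) as) is))) (Suc (Max (set hs')))"
      using der.R4[OF R4(1) _ hs'] R4(2) by simp
    then show ?case
      using Max_hs' unfolding der_le_def
      by (intro exI[of _ "Suc (Max (set hs'))"]) (simp add: sel_map[OF idx])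
  next
    case (R5 \<Gamma>' f "is" U as hs \<Delta> h)
    have \<Delta>: "\<Delta> = \<Gamma>" using R5.prems by simp
    obtain pc': "precontext \<phi> \<Gamma>'" and idx: "\<forall>i\<in>set is. 1 \<le> i \<and> i \<le> length as"
      and vU: "varsT U \<subseteq> set (OV \<Gamma>')"
      using presignature_FDecl[OF ps R5(1)] R5(2) by auto
    obtain hs' where hs': "length hs' = length (cmap_judgs (map (substE (sub (OV \<Gamma>) ss)) as) \<Theta> \<Gamma>')"
      "\<forall>j<length hs'. der \<phi> \<Sigma> (cmap_judgs (map (substE (sub (OV \<Gamma>) ss)) as) \<Theta> \<Gamma>' ! j) (hs' ! j)"
      and Max_hs': "Max (set hs') \<le> Max (set hs) + ?M"
    proof (rule der_cmap_judgs_subst[OF pc' R5(2)])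
      show "length hs = length \<Gamma>' + 2" using R5(3) by simp
      show "der \<phi> \<Sigma> (IsCtx \<Gamma>') (hs ! 1)" using R5(3) R5.IH(1) by (auto simp: cmap_judgs_nth)
      show "der_le \<phi> \<Sigma> (hs ! j + ?M) (subst_judg (sub (OV \<Gamma>) ss) \<Theta> (cmap_judgs as \<Delta> \<Gamma>' ! j))"
        if "j < length \<Gamma>' + 2" "j \<noteq> 1" for j
        using R5(3) R5.IH(1) that judg_ctx_cmap_judgs[OF that] \<Delta> by auto
    qed
    have U: "substT (sub (OV \<Gamma>) ss) (substT (sub (OV \<Gamma>') as) U) =
        substT (sub (OV \<Gamma>') (map (substE (sub (OV \<Gamma>) ss)) as)) U"
      using substT_sub_substT[OF _ vU] R5(2) by (simp add: OV_def)
    obtain h' where h': "h' \<le> h + ?M"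
      "der \<phi> \<Sigma> (IsType \<Theta> (substT (sub (OV \<Gamma>') (map (substE (sub (OV \<Gamma>) ss)) as)) U)) h'"
      using R5.IH(2) \<Delta> U unfolding der_le_def by auto
    have "der \<phi> \<Sigma> (HasType \<Theta> (App f (sel (map (substE (sub (OV \<Gamma>) ss)) as) is))
        (substT (sub (OV \<Gamma>') (map (substE (sub (OV \<Gamma>) ss)) as)) U)) (Suc (max (Max (set hs')) h'))"
      using der.R5[OF R5(1) _ hs' h'(2)] R5(2) by simp
    moreover have "Suc (max (Max (set hs')) h') \<le> Suc (max (Max (set hs)) h) + ?M"
      using Max_hs' h'(1) by (simp add: max_def)
    ultimately show ?case
      unfolding der_le_def using U
      by (intro exI[of _ "Suc (max (Max (set hs')) h')"]) (simp add: sel_map[OF idx])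
  }
qed

lemma der_le_subst:
  assumes "presignature \<phi> \<Sigma>" and "cmap_le \<phi> \<Sigma> ms ss \<Theta> \<Gamma>"
    and "precontext \<phi> \<Gamma>" and "distinct (OV \<Gamma>)"
    and "der_le \<phi> \<Sigma> k J" and "judg_ctx J = \<Gamma>"
  shows "der_le \<phi> \<Sigma> (k + Max (set ms)) (subst_judg (sub (OV \<Gamma>) ss) \<Theta> J)"
proof -
  obtain h where "h \<le> k" and "der \<phi> \<Sigma> J h" using assms(5) unfolding der_le_def by blast
  then show ?thesis
    using der_le_mono[OF der_subst[OF assms(1-4) _ assms(6)]] by simp
qed

theorem mainTheorem2:
  fixes \<phi> :: "'v set \<Rightarrow> 'v set" and fr :: "'v set \<Rightarrow> 'v"
    and \<Sigma> :: "('v, 'f, 't) decl set"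
    and ms :: "nat list" and ss :: "('v, 'f) pelem list"
    and \<Theta> \<Gamma> :: "('v, 'f, 't) ctx"
  assumes "fresh_provider \<phi> fr"
    and "signature \<phi> \<Sigma>"
    and "cmap_le \<phi> \<Sigma> ms ss \<Theta> \<Gamma>"
  shows "(\<forall>k B. der_le \<phi> \<Sigma> k (IsType \<Gamma> B) \<longrightarrow>
            der_le \<phi> \<Sigma> (k + Max (set ms)) (IsType \<Theta> (substT (sub (OV \<Gamma>) ss) B)))
       \<and> (\<forall>k b B. der_le \<phi> \<Sigma> k (HasType \<Gamma> b B) \<longrightarrow>
            der_le \<phi> \<Sigma> (k + Max (set ms))
              (HasType \<Theta> (substE (sub (OV \<Gamma>) ss) b) (substT (sub (OV \<Gamma>) ss) B)))"
proof -
  have ps: "presignature \<phi> \<Sigma>" using assms(2) by (simp add: signature_def)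
  have "der_le \<phi> \<Sigma> (Max (set ms)) (IsCtx \<Gamma>)"
    using cmap_le_judgs[OF assms(3), of 1] by (simp add: cmap_judgs_nth)
  then have pc: "precontext \<phi> \<Gamma>" using der_judg_wf[OF ps] unfolding der_le_def by fastforce
  note subst = der_le_subst[OF ps assms(3) pc precontext_distinct[OF assms(1) pc]]
  show ?thesis using subst[of _ "IsType \<Gamma> _"] subst[of _ "HasType \<Gamma> _ _"] by simp
qed

end
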